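(* The wreath product $\mathbb{Z}_2 \wr \mathbb{F}_2$ is Cayley $2$-tape linear-time computable.
   Context: $\mathbb{F}_2$ is the free group of rank $2$ and $\mathbb{Z}_2 \wr \mathbb{F}_2$ is the restricted wreath product (lamplighter group over $\mathbb{F}_2$). For $k>1$, a $k$-tape Turing machine has $k$ semi-infinite tapes, each with the unmodifiable symbol $\boxplus$ in its leftmost cell (occurring only there); $\boxdot$ is the blank symbol. A function $f : \Sigma^* \to \Sigma^*$ is computed on a $k$-tape Turing machine in linear time if there is such a machine and a constant $C>0$ such that for every input $x \in \Sigma^*$ of length $n$, started with first tape $\boxplus x \boxdot^\infty$, the other tapes $\boxplus \boxdot^\infty$, all heads on $\boxplus$, the machine halts in an accepting state in at most $Cn$ steps with the first tape having prefix $\boxplus f(x) \boxdot$. A finitely generated group $G$ with finite set of semigroup generators $S$ is Cayley $k$-tape linear-time computable if there exist a finite alphabet $\Sigma$, a language $L \subseteq \Sigma^*$, a bijection $\psi : L \to G$ and, for each $s \in S$, a function $f_s : \Sigma^* \to \Sigma^*$ computed on a $k$-tape Turing machine in linear time such that $\psi(f_s(w)) = \psi(w)s$ for all $w \in L$ (independent of the choice of $S$). *)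

theory Defs
  imports "HOL-Algebra.Group"
begin

datatype tsym = LeftEnd | Blank | Sym nat

datatype move = MoveL | MoveS | MoveR

text \<open>The machine halts when the
  transition function is undefined.\<close>
record tm =
  tm_states :: "nat set"
  tm_alpha :: "nat set"
  tm_start :: nat
  tm_accept :: "nat set"
  tm_delta :: "nat \<Rightarrow> tsym list \<Rightarrow> (nat \<times> tsym list \<times> move list) option"

definition tape_syms :: "nat set \<Rightarrow> tsym set" where
  "tape_syms A = {LeftEnd, Blank} \<union> Sym ` A"

definition valid_tm :: "nat \<Rightarrow> tm \<Rightarrow> bool" where
  "valid_tm k M \<longleftrightarrow>
     finite (tm_states M) \<and> finite (tm_alpha M) \<and>
     tm_start M \<in> tm_states M \<and> tm_accept M \<subseteq> tm_states M \<and>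
     (\<forall>q r. tm_delta M q r \<noteq> None \<longrightarrow>
        q \<in> tm_states M \<and> length r = k \<and> set r \<subseteq> tape_syms (tm_alpha M)) \<and>
     (\<forall>q r q' ws ms. tm_delta M q r = Some (q', ws, ms) \<longrightarrow>
        q' \<in> tm_states M \<and> length ws = k \<and> length ms = k \<and>
        set ws \<subseteq> tape_syms (tm_alpha M) \<and>
        (\<forall>i<k. (r ! i = LeftEnd \<longleftrightarrow> ws ! i = LeftEnd) \<and>
               (r ! i = LeftEnd \<longrightarrow> ms ! i \<noteq> MoveL)))"

text \<open>Configurations: state, tapes (tape i, cell j), head positions.\<close>
type_synonym tm_config = "nat \<times> (nat \<Rightarrow> nat \<Rightarrow> tsym) \<times> (nat \<Rightarrow> nat)"

fun do_move :: "move \<Rightarrow> nat \<Rightarrow> nat" where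
  "do_move MoveL h = h - 1"
| "do_move MoveS h = h"
| "do_move MoveR h = Suc h"

fun tm_step :: "nat \<Rightarrow> tm \<Rightarrow> tm_config \<Rightarrow> tm_config option" where
  "tm_step k M (q, T, H) =
     (case tm_delta M q (map (\<lambda>i. T i (H i)) [0..<k]) of
        None \<Rightarrow> None
      | Some (q', ws, ms) \<Rightarrow>
          Some (q',
                \<lambda>i. if i < k then (T i)(H i := ws ! i) else T i,
                \<lambda>i. if i < k then do_move (ms ! i) (H i) else H i))"

fun tm_steps :: "nat \<Rightarrow> tm \<Rightarrow> nat \<Rightarrow> tm_config \<Rightarrow> tm_config option" where
  "tm_steps k M 0 c = Some c"
| "tm_steps k M (Suc n) c = Option.bind (tm_steps k M n c) (tm_step k M)"

definition init_config :: "tm \<Rightarrow> nat list \<Rightarrow> tm_config" where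
  "init_config M x =
     (tm_start M,
      \<lambda>i j. if j = 0 then LeftEnd
            else if i = 0 \<and> j \<le> length x then Sym (x ! (j - 1)) else Blank,
      \<lambda>i. 0)"

definition has_output :: "(nat \<Rightarrow> tsym) \<Rightarrow> nat list \<Rightarrow> bool" where
  "has_output tp y \<longleftrightarrow>
     tp 0 = LeftEnd \<and> (\<forall>j<length y. tp (Suc j) = Sym (y ! j)) \<and>
     tp (Suc (length y)) = Blank"

definition lin_time_computable :: "nat \<Rightarrow> nat set \<Rightarrow> (nat list \<Rightarrow> nat list) \<Rightarrow> bool" where
  "lin_time_computable k \<Sigma> f \<longleftrightarrow>
     (\<forall>x \<in> lists \<Sigma>. f x \<in> lists \<Sigma>) \<and>
     (\<exists>M (C::nat). valid_tm k M \<and> \<Sigma> \<subseteq> tm_alpha M \<and> C > 0 \<and>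
        (\<forall>x \<in> lists \<Sigma>. \<exists>t c.
            t \<le> C * (length x + 1) \<and>
            tm_steps k M t (init_config M x) = Some c \<and>
            tm_step k M c = None \<and>
            fst c \<in> tm_accept M \<and>
            has_output (fst (snd c) 0) (f x)))"

definition cayley_lin_computable ::
  "nat \<Rightarrow> ('g, 'b) monoid_scheme \<Rightarrow> 'g set \<Rightarrow> bool" where
  "cayley_lin_computable k G S \<longleftrightarrow>
     (\<exists>(\<Sigma>::nat set) L (\<psi>::nat list \<Rightarrow> 'g) (f::'g \<Rightarrow> nat list \<Rightarrow> nat list).
        finite \<Sigma> \<and> L \<subseteq> lists \<Sigma> \<and> bij_betw \<psi> L (carrier G) \<and>
        (\<forall>s \<in> S. lin_time_computable k \<Sigma> (f s) \<and>
           (\<forall>w \<in> L. f s w \<in> L \<and> \<psi> (f s w) = \<psi> w \<otimes>\<^bsub>G\<^esub> s)))"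

text \<open>Letters: (generator, inverted?) with generator False = a, True = b.
  Elements of F_2 are freely reduced words.\<close>
type_synonym f2_letter = "bool \<times> bool"

definition inv_letter :: "f2_letter \<Rightarrow> f2_letter" where
  "inv_letter x = (fst x, \<not> snd x)"

definition f2_reduced :: "f2_letter list \<Rightarrow> bool" where
  "f2_reduced w \<longleftrightarrow> (\<forall>i. Suc i < length w \<longrightarrow> w ! Suc i \<noteq> inv_letter (w ! i))"

definition f2_mult_letter :: "f2_letter list \<Rightarrow> f2_letter \<Rightarrow> f2_letter list" where
  "f2_mult_letter w x = (if w \<noteq> [] \<and> last w = inv_letter x then butlast w else w @ [x])"

definition f2_mult :: "f2_letter list \<Rightarrow> f2_letter list \<Rightarrow> f2_letter list" where
  "f2_mult u v = foldl f2_mult_letter u v"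

definition F2 :: "f2_letter list monoid" where
  "F2 = \<lparr>carrier = {w. f2_reduced w}, mult = f2_mult, one = []\<rparr>"

text \<open>Restricted wreath product: an element is a finitely supported lamp
  configuration F_2 -> Z_2 (a finite set of lit positions) and a position.
  (f, g) (f', g') = (f + g.f', g g').\<close>
definition lamp_F2 :: "(f2_letter list set \<times> f2_letter list) monoid" where
  "lamp_F2 = \<lparr>carrier = {(f, g). finite f \<and> f \<subseteq> carrier F2 \<and> g \<in> carrier F2},
              mult = (\<lambda>(f, g) (f', g').
                        ((f - (f2_mult g ` f')) \<union> ((f2_mult g ` f') - f), f2_mult g g')),
              one = ({}, [])\<rparr>"

text \<open>Standard finite set of semigroup generators: a, a^-1, b, b^-1 and the
  lamp toggle at the identity.\<close>
definition lamp_F2_gens :: "(f2_letter list set \<times> f2_letter list) set" where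
  "lamp_F2_gens = {({}, [x]) | x. True} \<union> {({[]}, [])}"

end

(* The element (F, g) of the lamplighter group is written as the reduced word g followed, each
   after a separator, by the words g\<inverse>f for f \<in> F in lexicographic order: the lit lamps as
   seen from the lamplighter. Right multiplication by a letter x turns g into gx and every
   relative lamp e into x\<inverse>e, which either cancels the first letter of e or prepends x\<inverse>.
   Splitting the cancelled words according to their next letter, the new word is the new position
   followed by three blocks of lamps, each produced in one left-to-right pass by a finite-state
   transducer; toggling the lamp at the lamplighter adds or removes the empty word, which comes
   first. A two-tape machine runs finitely many such transducers one after the other over its
   input, collecting their outputs on the second tape, and copies the result back, all in
   linear time. *)

theory Submission
  imports Defs "HOL-Library.Countable" "HOL-Library.List_Lexorder"
begin

section \<open>Sequential transducers\<close>

record transducer =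
  tr_step :: "nat \<Rightarrow> nat \<Rightarrow> nat \<times> nat list"
  tr_final :: "nat \<Rightarrow> nat list"

fun tr_state :: "transducer \<Rightarrow> nat \<Rightarrow> nat list \<Rightarrow> nat" where
  "tr_state T q [] = q"
| "tr_state T q (a # w) = tr_state T (fst (tr_step T q a)) w"

fun tr_output :: "transducer \<Rightarrow> nat \<Rightarrow> nat list \<Rightarrow> nat list" where
  "tr_output T q [] = []"
| "tr_output T q (a # w) = snd (tr_step T q a) @ tr_output T (fst (tr_step T q a)) w"

definition tr_run :: "transducer \<Rightarrow> nat list \<Rightarrow> nat list" where
  "tr_run T w = tr_output T 0 w @ tr_final T (tr_state T 0 w)"

definition run_all :: "transducer list \<Rightarrow> nat list \<Rightarrow> nat list" where
  "run_all ts w = concat (map (\<lambda>T. tr_run T w) ts)"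

lemma tr_state_append: "tr_state T q (u @ v) = tr_state T (tr_state T q u) v"
  by (induction u arbitrary: q) auto

lemma tr_output_append: "tr_output T q (u @ v) = tr_output T q u @ tr_output T (tr_state T q u) v"
  by (induction u arbitrary: q) auto

lemma tr_loop:
  assumes "\<forall>a\<in>set u. tr_step T q a = (q, h a)"
  shows "tr_state T q u = q" "tr_output T q u = concat (map h u)"
  using assms by (induction u) auto

definition bounded_transducer :: "nat set \<Rightarrow> nat \<Rightarrow> nat \<Rightarrow> transducer \<Rightarrow> bool" where
  "bounded_transducer S N K T \<longleftrightarrow>
     (\<forall>q<N. \<forall>a\<in>S. fst (tr_step T q a) < N \<and>
        set (snd (tr_step T q a)) \<subseteq> S \<and> length (snd (tr_step T q a)) \<le> K) \<and>
     (\<forall>q<N. set (tr_final T q) \<subseteq> S \<and> length (tr_final T q) \<le> K)"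

lemma bounded_transducer_stepD:
  assumes "bounded_transducer S N K T" "q < N" "a \<in> S"
  shows "fst (tr_step T q a) < N" "set (snd (tr_step T q a)) \<subseteq> S" "length (snd (tr_step T q a)) \<le> K"
  using assms by (auto simp: bounded_transducer_def)

lemma bounded_transducer_finalD:
  assumes "bounded_transducer S N K T" "q < N"
  shows "set (tr_final T q) \<subseteq> S" "length (tr_final T q) \<le> K"
  using assms by (auto simp: bounded_transducer_def)

lemma bounded_transducer_state:
  "bounded_transducer S N K T \<Longrightarrow> q < N \<Longrightarrow> set w \<subseteq> S \<Longrightarrow> tr_state T q w < N"
  by (induction w arbitrary: q) (auto simp: bounded_transducer_def)

lemma bounded_transducer_output:
  "bounded_transducer S N K T \<Longrightarrow> q < N \<Longrightarrow> set w \<subseteq> S \<Longrightarrow>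
     set (tr_output T q w) \<subseteq> S \<and> length (tr_output T q w) \<le> K * length w"
proof (induction w arbitrary: q)
  case (Cons a w)
  then show ?case
    by (force simp: bounded_transducer_def)
qed simp

lemma bounded_transducer_run:
  assumes "bounded_transducer S N K T" "0 < N" "set w \<subseteq> S"
  shows "set (tr_run T w) \<subseteq> S" "length (tr_run T w) \<le> K * (length w + 1)"
  using bounded_transducer_output[OF assms(1,2,3)] bounded_transducer_state[OF assms(1,2,3)] assms(1)
  by (auto simp: tr_run_def bounded_transducer_def)

section \<open>A two-tape machine running transducers one after the other\<close>

datatype phase = Start | Scan | Flush | Rewind | RewindOut | Copy | Halt

instance phase :: countable
  by countable_datatype

instance phase :: finite
proof
  have "(UNIV :: phase set) = {Start, Scan, Flush, Rewind, RewindOut, Copy, Halt}"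
    using phase.exhaust by auto
  then show "finite (UNIV :: phase set)"
    by (metis finite.emptyI finite_insert)
qed

text \<open>A control state \<open>(p, i, q, ps)\<close> says that transducer \<open>i\<close> is in state \<open>q\<close> and that \<open>ps\<close>
  still has to be written on tape 1. Each pass scans tape 0 from left to right, emits the final
  output and rewinds tape 0; after the last pass tape 1 is rewound and copied onto tape 0.\<close>
type_synonym ctrl = "phase \<times> nat \<times> nat \<times> nat list"

definition next_pass :: "transducer list \<Rightarrow> nat \<Rightarrow> ctrl" where
  "next_pass ts i = (if Suc i < length ts then (Scan, Suc i, 0, []) else (RewindOut, i, 0, []))"

fun control ::
  "transducer list \<Rightarrow> ctrl \<Rightarrow> tsym \<Rightarrow> tsym \<Rightarrow> (ctrl \<times> tsym \<times> tsym \<times> move \<times> move) option"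
where
  "control ts (Start, i, q, ps) r0 r1 = Some ((Scan, 0, 0, []), r0, r1, MoveR, MoveR)"
| "control ts (Scan, i, q, p # ps) r0 r1 = Some ((Scan, i, q, ps), r0, Sym p, MoveS, MoveR)"
| "control ts (Flush, i, q, p # ps) r0 r1 = Some ((Flush, i, q, ps), r0, Sym p, MoveS, MoveR)"
| "control ts (Scan, i, q, []) (Sym a) r1 =
     Some ((Scan, i, fst (tr_step (ts ! i) q a), snd (tr_step (ts ! i) q a)), Sym a, r1, MoveR, MoveS)"
| "control ts (Scan, i, q, []) Blank r1 = Some ((Flush, i, q, tr_final (ts ! i) q), Blank, r1, MoveS, MoveS)"
| "control ts (Flush, i, q, []) r0 r1 = Some ((Rewind, i, 0, []), r0, r1, MoveL, MoveS)"
| "control ts (Rewind, i, q, ps) LeftEnd r1 = Some (next_pass ts i, LeftEnd, r1, MoveR, MoveS)"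
| "control ts (Rewind, i, q, ps) r0 r1 = Some ((Rewind, i, 0, []), r0, r1, MoveL, MoveS)"
| "control ts (RewindOut, i, q, ps) r0 LeftEnd = Some ((Copy, i, 0, []), r0, LeftEnd, MoveS, MoveR)"
| "control ts (RewindOut, i, q, ps) r0 r1 = Some ((RewindOut, i, 0, []), r0, r1, MoveS, MoveL)"
| "control ts (Copy, i, q, ps) r0 (Sym a) = Some ((Copy, i, 0, []), Sym a, Sym a, MoveR, MoveR)"
| "control ts (Copy, i, q, ps) r0 Blank = Some ((Halt, i, 0, []), Blank, Blank, MoveS, MoveS)"
| "control ts c r0 r1 = None"

lemma control_rewinding:
  "r0 \<noteq> LeftEnd \<Longrightarrow>
     control ts (Rewind, i, q, ps) r0 r1 = Some ((Rewind, i, 0, []), r0, r1, MoveL, MoveS)"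
  "r1 \<noteq> LeftEnd \<Longrightarrow>
     control ts (RewindOut, i, q, ps) r0 r1 = Some ((RewindOut, i, 0, []), r0, r1, MoveS, MoveL)"
  by (cases r0; simp) (cases r1; simp)

definition ctrls :: "transducer list \<Rightarrow> nat set \<Rightarrow> nat \<Rightarrow> nat \<Rightarrow> ctrl set" where
  "ctrls ts S N K = {(p, i, q, ps). i < length ts \<and> q < N \<and> set ps \<subseteq> S \<and> length ps \<le> K}"

lemma finite_ctrls:
  assumes "finite S"
  shows "finite (ctrls ts S N K)"
proof (rule finite_subset)
  show "ctrls ts S N K \<subseteq> UNIV \<times> {..<length ts} \<times> {..<N} \<times> {ps. set ps \<subseteq> S \<and> length ps \<le> K}"
    by (auto simp: ctrls_def)
  show "finite ((UNIV :: phase set) \<times> {..<length ts} \<times> {..<N} \<times> {ps. set ps \<subseteq> S \<and> length ps \<le> K})"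
    using assms by (intro finite_cartesian_product) (simp_all add: finite_lists_length_le)
qed

definition legal_write :: "tsym \<Rightarrow> tsym \<Rightarrow> move \<Rightarrow> bool" where
  "legal_write r w m \<longleftrightarrow> (r = LeftEnd \<longleftrightarrow> w = LeftEnd) \<and> (r = LeftEnd \<longrightarrow> m \<noteq> MoveL)"

text \<open>The guard keeps the machine inside its finite control set and makes it respect the
  left-end marker, so that validity is immediate; it never fires on the runs analysed below.\<close>
definition machine_delta ::
  "transducer list \<Rightarrow> nat set \<Rightarrow> nat \<Rightarrow> nat \<Rightarrow> nat \<Rightarrow> tsym list \<Rightarrow>
     (nat \<times> tsym list \<times> move list) option"
where
  "machine_delta ts S N K q r =
    (if q \<in> to_nat ` ctrls ts S N K \<and> length r = 2 \<and> set r \<subseteq> tape_syms S then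
       (case control ts (from_nat q) (r ! 0) (r ! 1) of
          None \<Rightarrow> None
        | Some (c', w0, w1, m0, m1) \<Rightarrow>
            if c' \<in> ctrls ts S N K \<and> w0 \<in> tape_syms S \<and> w1 \<in> tape_syms S \<and>
               legal_write (r ! 0) w0 m0 \<and> legal_write (r ! 1) w1 m1
            then Some (to_nat c', [w0, w1], [m0, m1]) else None)
     else None)"

definition transducer_machine :: "transducer list \<Rightarrow> nat set \<Rightarrow> nat \<Rightarrow> nat \<Rightarrow> tm" where
  "transducer_machine ts S N K =
    \<lparr>tm_states = to_nat ` ctrls ts S N K, tm_alpha = S,
     tm_start = to_nat (Start, 0 :: nat, 0 :: nat, [] :: nat list),
     tm_accept = to_nat ` {c \<in> ctrls ts S N K. fst c = Halt},
     tm_delta = machine_delta ts S N K\<rparr>"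

lemma valid_transducer_machine:
  assumes "finite S" "ts \<noteq> []" "0 < N"
  shows "valid_tm 2 (transducer_machine ts S N K)"
proof -
  have "(Start, 0, 0, []) \<in> ctrls ts S N K"
    using assms by (simp add: ctrls_def)
  then show ?thesis
    using assms(1)
    by (auto simp: valid_tm_def transducer_machine_def machine_delta_def finite_ctrls legal_write_def
             less_2_cases_iff split: if_splits option.splits)
qed

definition word_tape :: "nat list \<Rightarrow> nat \<Rightarrow> tsym" where
  "word_tape x j = (if j = 0 then LeftEnd else if j \<le> length x then Sym (x ! (j - 1)) else Blank)"

lemma word_tape_0 [simp]: "word_tape x 0 = LeftEnd"
  by (simp add: word_tape_def)

lemma word_tape_Suc_neq_LeftEnd [simp]: "word_tape x (Suc j) \<noteq> LeftEnd"
  by (simp add: word_tape_def)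

lemma word_tape_Suc_length [simp]: "word_tape x (Suc (length x)) = Blank"
  by (simp add: word_tape_def)

lemma word_tape_beyond [simp]: "length x < j \<Longrightarrow> word_tape x j = Blank"
  by (simp add: word_tape_def)

lemma word_tape_Suc_nth: "j < length x \<Longrightarrow> word_tape x (Suc j) = Sym (x ! j)"
  by (simp add: word_tape_def)

lemma word_tape_snoc: "(word_tape x)(Suc (length x) := Sym a) = word_tape (x @ [a])"
  by (auto simp: word_tape_def nth_append fun_eq_iff)

lemma tape_syms_simps [simp]:
  "LeftEnd \<in> tape_syms S" "Blank \<in> tape_syms S" "Sym a \<in> tape_syms S \<longleftrightarrow> a \<in> S"
  by (auto simp: tape_syms_def)

lemma word_tape_in_tape_syms: "set x \<subseteq> S \<Longrightarrow> word_tape x j \<in> tape_syms S"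
  by (auto simp: word_tape_def)

lemma legal_write_simps [simp]:
  "legal_write r r MoveS" "legal_write r r MoveR"
  "r \<noteq> LeftEnd \<Longrightarrow> legal_write r w m \<longleftrightarrow> w \<noteq> LeftEnd"
  by (auto simp: legal_write_def)

lemma mem_ctrls [simp]:
  "(p, i, q, ps) \<in> ctrls ts S N K \<longleftrightarrow> i < length ts \<and> q < N \<and> set ps \<subseteq> S \<and> length ps \<le> K"
  by (simp add: ctrls_def)

definition overwrite :: "nat list \<Rightarrow> nat \<Rightarrow> (nat \<Rightarrow> tsym) \<Rightarrow> nat \<Rightarrow> tsym" where
  "overwrite y j t k = (if k \<le> j then word_tape y k else t k)"

lemma overwrite_Suc: "(overwrite y j t)(Suc j := word_tape y (Suc j)) = overwrite y (Suc j) t"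
  by (auto simp: overwrite_def fun_eq_iff le_Suc_eq)

lemma overwrite_0: "t 0 = LeftEnd \<Longrightarrow> overwrite y 0 t = t"
  by (auto simp: overwrite_def fun_eq_iff)

lemma has_output_overwrite: "has_output (overwrite y (Suc (length y)) t) y"
  by (simp add: has_output_def overwrite_def word_tape_def)

text \<open>Tapes beyond the first two are never touched by a 2-tape machine and stay blank.\<close>
definition conf :: "ctrl \<Rightarrow> (nat \<Rightarrow> tsym) \<Rightarrow> nat \<Rightarrow> (nat \<Rightarrow> tsym) \<Rightarrow> nat \<Rightarrow> tm_config" where
  "conf c t0 h0 t1 h1 =
     (to_nat c, \<lambda>i. if i = 0 then t0 else if i = 1 then t1 else word_tape [],
      \<lambda>i. if i = 0 then h0 else if i = 1 then h1 else 0)"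

lemma init_config_transducer_machine:
  "init_config (transducer_machine ts S N K) x = conf (Start, 0, 0, []) (word_tape x) 0 (word_tape []) 0"
  by (auto simp: init_config_def transducer_machine_def conf_def word_tape_def fun_eq_iff)

lemma tm_steps_add: "tm_steps k M (m + n) c = Option.bind (tm_steps k M m c) (tm_steps k M n)"
  by (induction n) (auto simp: bind_assoc)

lemma tm_steps_Suc_left: "tm_steps k M (Suc n) c = Option.bind (tm_step k M c) (tm_steps k M n)"
  using tm_steps_add[of k M 1 n c] by simp

lemma tm_steps_trans:
  "tm_steps k M m c = Some c' \<Longrightarrow> tm_steps k M n c' = Some c'' \<Longrightarrow> tm_steps k M (m + n) c = Some c''"
  by (simp add: tm_steps_add)

lemma tm_steps_Suc_trans:
  "tm_steps k M 1 c = Some c' \<Longrightarrow> tm_steps k M n c' = Some c'' \<Longrightarrow> tm_steps k M (Suc n) c = Some c''"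
  using tm_steps_trans[of k M 1 c c' n c''] by simp

lemma tm_step_conf:
  assumes "c \<in> ctrls ts S N K" "t0 h0 \<in> tape_syms S" "t1 h1 \<in> tape_syms S"
  shows "tm_step 2 (transducer_machine ts S N K) (conf c t0 h0 t1 h1) =
    (case control ts c (t0 h0) (t1 h1) of
       None \<Rightarrow> None
     | Some (c', w0, w1, m0, m1) \<Rightarrow>
         if c' \<in> ctrls ts S N K \<and> w0 \<in> tape_syms S \<and> w1 \<in> tape_syms S \<and>
            legal_write (t0 h0) w0 m0 \<and> legal_write (t1 h1) w1 m1
         then Some (conf c' (t0(h0 := w0)) (do_move m0 h0) (t1(h1 := w1)) (do_move m1 h1))
         else None)"
  using assms
  by (auto simp: conf_def transducer_machine_def machine_delta_def upt_rec fun_eq_iff split: option.split)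

lemma tm_steps_Suc_conf:
  assumes "c \<in> ctrls ts S N K" "t0 h0 \<in> tape_syms S" "t1 h1 \<in> tape_syms S"
  shows "tm_steps 2 (transducer_machine ts S N K) (Suc n) (conf c t0 h0 t1 h1) =
    (case control ts c (t0 h0) (t1 h1) of
       None \<Rightarrow> None
     | Some (c', w0, w1, m0, m1) \<Rightarrow>
         if c' \<in> ctrls ts S N K \<and> w0 \<in> tape_syms S \<and> w1 \<in> tape_syms S \<and>
            legal_write (t0 h0) w0 m0 \<and> legal_write (t1 h1) w1 m1
         then tm_steps 2 (transducer_machine ts S N K) n
                (conf c' (t0(h0 := w0)) (do_move m0 h0) (t1(h1 := w1)) (do_move m1 h1))
         else None)"
  using tm_step_conf[of c ts S N K t0 h0 t1 h1] assms unfolding tm_steps_Suc_left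
  by (auto split: option.split)

lemma length_concat_map_le:
  "(\<And>T. T \<in> set ts \<Longrightarrow> length (f T) \<le> b) \<Longrightarrow> length (concat (map f ts)) \<le> length ts * b"
  by (induction ts) (auto intro: add_mono)

context
  fixes ts :: "transducer list" and S :: "nat set" and N K :: nat
  assumes ts_ne: "ts \<noteq> []" and N_pos: "0 < N"
    and bounded: "\<forall>T\<in>set ts. bounded_transducer S N K T"
begin

abbreviation steps :: "nat \<Rightarrow> tm_config \<Rightarrow> tm_config option" where
  "steps \<equiv> tm_steps 2 (transducer_machine ts S N K)"

declare tm_steps.simps(2) [simp del] fun_upd_idem [simp]

lemma bounded_nth: "i < length ts \<Longrightarrow> bounded_transducer S N K (ts ! i)"
  using bounded by simp

lemma emit_steps:
  assumes "p = Scan \<or> p = Flush" "(p, i, q, ps) \<in> ctrls ts S N K" "t0 h0 \<in> tape_syms S"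
  shows "steps (length ps) (conf (p, i, q, ps) t0 h0 (word_tape out) (Suc (length out))) =
         Some (conf (p, i, q, []) t0 h0 (word_tape (out @ ps)) (Suc (length (out @ ps))))"
  using assms(2)
proof (induction ps arbitrary: out)
  case (Cons a ps)
  have "steps (length (a # ps)) (conf (p, i, q, a # ps) t0 h0 (word_tape out) (Suc (length out))) =
        steps (length ps) (conf (p, i, q, ps) t0 h0 (word_tape (out @ [a])) (Suc (length (out @ [a]))))"
    using assms(1,3) Cons.prems by (auto simp: tm_steps_Suc_conf word_tape_snoc)
  also have "\<dots> = Some (conf (p, i, q, []) t0 h0 (word_tape (out @ a # ps)) (Suc (length (out @ a # ps))))"
    using Cons.IH[of "out @ [a]"] Cons.prems by simp
  finally show ?case .
qed simp

lemma scan_steps: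
  assumes "i < length ts" "q < N" "set x \<subseteq> S" "j \<le> length x" "drop j x = xs"
  shows "steps (length xs + length (tr_output (ts ! i) q xs))
           (conf (Scan, i, q, []) (word_tape x) (Suc j) (word_tape out) (Suc (length out))) =
         Some (conf (Scan, i, tr_state (ts ! i) q xs, []) (word_tape x) (Suc (length x))
           (word_tape (out @ tr_output (ts ! i) q xs)) (Suc (length (out @ tr_output (ts ! i) q xs))))"
  using assms(2,4,5)
proof (induction xs arbitrary: j q out)
  case Nil
  then show ?case by simp
next
  case (Cons a xs)
  let ?T = "ts ! i"
  obtain q' ps where step: "tr_step ?T q a = (q', ps)"
    by fastforce
  have "j < length x"
    using Cons.prems(3) by (metis drop_all list.distinct(1) not_le)
  then have j: "j < length x" "x ! j = a" "drop (Suc j) x = xs"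
    using Cons.prems(3) by (metis Cons_nth_drop_Suc list.inject)+
  have "a \<in> S"
    using assms(3) j nth_mem by blast
  then have q': "q' < N" "set ps \<subseteq> S" "length ps \<le> K"
    using bounded_transducer_stepD[OF bounded_nth[OF assms(1)] Cons.prems(1) \<open>a \<in> S\<close>] step by auto
  have "steps 1 (conf (Scan, i, q, []) (word_tape x) (Suc j) (word_tape out) (Suc (length out))) =
        Some (conf (Scan, i, q', ps) (word_tape x) (Suc (Suc j)) (word_tape out) (Suc (length out)))"
    using assms(1) Cons.prems(1) j q' step \<open>a \<in> S\<close>
    by (simp add: tm_steps_Suc_conf word_tape_Suc_nth word_tape_in_tape_syms)
  moreover have "steps (length ps)
      (conf (Scan, i, q', ps) (word_tape x) (Suc (Suc j)) (word_tape out) (Suc (length out))) =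
    Some (conf (Scan, i, q', []) (word_tape x) (Suc (Suc j)) (word_tape (out @ ps)) (Suc (length (out @ ps))))"
    using assms(1,3) q' by (intro emit_steps) (auto simp: word_tape_in_tape_syms)
  moreover have "steps (length xs + length (tr_output ?T q' xs))
      (conf (Scan, i, q', []) (word_tape x) (Suc (Suc j)) (word_tape (out @ ps)) (Suc (length (out @ ps)))) =
    Some (conf (Scan, i, tr_state ?T q' xs, []) (word_tape x) (Suc (length x))
      (word_tape ((out @ ps) @ tr_output ?T q' xs)) (Suc (length ((out @ ps) @ tr_output ?T q' xs))))"
    using Cons.IH[of q' "Suc j" "out @ ps"] q' j by simp
  ultimately have "steps (1 + length ps + (length xs + length (tr_output ?T q' xs)))
      (conf (Scan, i, q, []) (word_tape x) (Suc j) (word_tape out) (Suc (length out))) =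
    Some (conf (Scan, i, tr_state ?T q' xs, []) (word_tape x) (Suc (length x))
      (word_tape ((out @ ps) @ tr_output ?T q' xs)) (Suc (length ((out @ ps) @ tr_output ?T q' xs))))"
    by (blast intro: tm_steps_trans)
  then show ?case
    using step by (simp add: ac_simps)
qed

lemma flush_steps:
  assumes "i < length ts" "q < N" "set x \<subseteq> S"
  shows "steps (length (tr_final (ts ! i) q) + 2)
           (conf (Scan, i, q, []) (word_tape x) (Suc (length x)) (word_tape out) (Suc (length out))) =
         Some (conf (Rewind, i, 0, []) (word_tape x) (length x)
           (word_tape (out @ tr_final (ts ! i) q)) (Suc (length (out @ tr_final (ts ! i) q))))"
proof -
  let ?f = "tr_final (ts ! i) q"
  let ?tape1 = "word_tape (out @ ?f)" and ?head1 = "Suc (length (out @ ?f))"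
  have f: "set ?f \<subseteq> S" "length ?f \<le> K"
    using bounded_transducer_finalD[OF bounded_nth[OF assms(1)] assms(2)] by auto
  have "steps 1 (conf (Scan, i, q, []) (word_tape x) (Suc (length x)) (word_tape out) (Suc (length out))) =
        Some (conf (Flush, i, q, ?f) (word_tape x) (Suc (length x)) (word_tape out) (Suc (length out)))"
    using assms f by (simp add: tm_steps_Suc_conf)
  moreover have "steps (length ?f)
      (conf (Flush, i, q, ?f) (word_tape x) (Suc (length x)) (word_tape out) (Suc (length out))) =
    Some (conf (Flush, i, q, []) (word_tape x) (Suc (length x)) ?tape1 ?head1)"
    using assms f by (intro emit_steps) auto
  moreover have "steps 1 (conf (Flush, i, q, []) (word_tape x) (Suc (length x)) ?tape1 ?head1) =
        Some (conf (Rewind, i, 0, []) (word_tape x) (length x) ?tape1 ?head1)"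
    using assms f by (simp add: tm_steps_Suc_conf)
  ultimately have "steps (1 + length ?f + 1)
      (conf (Scan, i, q, []) (word_tape x) (Suc (length x)) (word_tape out) (Suc (length out))) =
    Some (conf (Rewind, i, 0, []) (word_tape x) (length x) ?tape1 ?head1)"
    by (blast intro: tm_steps_trans)
  then show ?thesis
    by (simp add: ac_simps)
qed

lemma rewind_steps:
  assumes "i < length ts" "set x \<subseteq> S" "j \<le> length x" "t1 h1 \<in> tape_syms S"
  shows "steps (Suc j) (conf (Rewind, i, 0, []) (word_tape x) j t1 h1) =
         Some (conf (next_pass ts i) (word_tape x) 1 t1 h1)"
  using assms(3)
proof (induction j)
  case 0
  then show ?case
    using assms N_pos by (simp add: tm_steps_Suc_conf next_pass_def)
next
  case (Suc j)
  have "steps 1 (conf (Rewind, i, 0, []) (word_tape x) (Suc j) t1 h1) =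
        Some (conf (Rewind, i, 0, []) (word_tape x) j t1 h1)"
    using assms N_pos Suc.prems by (simp add: tm_steps_Suc_conf control_rewinding word_tape_in_tape_syms)
  then show ?case
    using tm_steps_Suc_trans[OF _ Suc.IH] Suc.prems by simp
qed

lemma pass_steps:
  assumes "i < length ts" "set x \<subseteq> S"
  shows "steps (2 * length x + length (tr_run (ts ! i) x) + 3)
           (conf (Scan, i, 0, []) (word_tape x) 1 (word_tape out) (Suc (length out))) =
         Some (conf (next_pass ts i) (word_tape x) 1
           (word_tape (out @ tr_run (ts ! i) x)) (Suc (length (out @ tr_run (ts ! i) x))))"
proof -
  let ?T = "ts ! i"
  let ?q = "tr_state ?T 0 x"
  let ?out1 = "out @ tr_output ?T 0 x" and ?out2 = "out @ tr_run ?T x"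
  have q: "?q < N"
    using bounded_transducer_state[OF bounded_nth[OF assms(1)] N_pos assms(2)] .
  have run: "?out2 = ?out1 @ tr_final ?T ?q"
    by (simp add: tr_run_def)
  have "steps (length x + length (tr_output ?T 0 x))
      (conf (Scan, i, 0, []) (word_tape x) 1 (word_tape out) (Suc (length out))) =
    Some (conf (Scan, i, ?q, []) (word_tape x) (Suc (length x)) (word_tape ?out1) (Suc (length ?out1)))"
    using scan_steps[OF assms(1) N_pos assms(2), of 0 x out] by simp
  moreover have "steps (length (tr_final ?T ?q) + 2)
      (conf (Scan, i, ?q, []) (word_tape x) (Suc (length x)) (word_tape ?out1) (Suc (length ?out1))) =
    Some (conf (Rewind, i, 0, []) (word_tape x) (length x) (word_tape ?out2) (Suc (length ?out2)))"
    unfolding run by (rule flush_steps[OF assms(1) q assms(2)])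
  moreover have "steps (Suc (length x))
      (conf (Rewind, i, 0, []) (word_tape x) (length x) (word_tape ?out2) (Suc (length ?out2))) =
    Some (conf (next_pass ts i) (word_tape x) 1 (word_tape ?out2) (Suc (length ?out2)))"
    by (rule rewind_steps) (simp_all add: assms)
  ultimately have "steps (length x + length (tr_output ?T 0 x) + (length (tr_final ?T ?q) + 2) + Suc (length x))
      (conf (Scan, i, 0, []) (word_tape x) 1 (word_tape out) (Suc (length out))) =
    Some (conf (next_pass ts i) (word_tape x) 1 (word_tape ?out2) (Suc (length ?out2)))"
    by (blast intro: tm_steps_trans)
  moreover have "length x + length (tr_output ?T 0 x) + (length (tr_final ?T ?q) + 2) + Suc (length x) =
      2 * length x + length (tr_run ?T x) + 3"
    by (simp add: tr_run_def)
  ultimately show ?thesis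
    by (simp only:)
qed

lemma passes_steps:
  assumes "i < length ts" "set x \<subseteq> S"
  defines "ys \<equiv> \<lambda>i. run_all (drop i ts) x"
  shows "steps ((length ts - i) * (2 * length x + 3) + length (ys i))
           (conf (Scan, i, 0, []) (word_tape x) 1 (word_tape out) (Suc (length out))) =
         Some (conf (RewindOut, length ts - 1, 0, []) (word_tape x) 1
           (word_tape (out @ ys i)) (Suc (length (out @ ys i))))"
  using assms(1)
proof (induction "length ts - Suc i" arbitrary: i out)
  case 0
  then have last: "\<not> Suc i < length ts" "length ts - 1 = i" "length ts - i = 1" "drop i ts = [ts ! i]"
    by (auto simp: Cons_nth_drop_Suc[symmetric])
  have ys: "ys i = tr_run (ts ! i) x"
    by (simp add: last ys_def run_all_def)
  show ?case
    unfolding ys last(2,3) using pass_steps[OF \<open>i < length ts\<close> assms(2), of out] last(1)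
    by (simp add: ac_simps next_pass_def)
next
  case (Suc n)
  let ?r = "tr_run (ts ! i) x"
  have i: "Suc i < length ts" "n = length ts - Suc (Suc i)" "length ts - i = Suc (length ts - Suc i)"
    using Suc by auto
  have ys: "ys i = ?r @ ys (Suc i)"
    using Suc.prems by (simp add: ys_def run_all_def Cons_nth_drop_Suc[symmetric])
  have "steps (2 * length x + length ?r + 3 + ((length ts - Suc i) * (2 * length x + 3) + length (ys (Suc i))))
      (conf (Scan, i, 0, []) (word_tape x) 1 (word_tape out) (Suc (length out))) =
    Some (conf (RewindOut, length ts - 1, 0, []) (word_tape x) 1
      (word_tape ((out @ ?r) @ ys (Suc i))) (Suc (length ((out @ ?r) @ ys (Suc i)))))"
    using pass_steps[OF Suc.prems assms(2), of out] Suc.hyps(1)[OF i(2,1), of "out @ ?r"] i(1)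
    by (auto simp: next_pass_def intro: tm_steps_trans)
  moreover have "2 * length x + length ?r + 3 + ((length ts - Suc i) * (2 * length x + 3) + length (ys (Suc i))) =
      (length ts - i) * (2 * length x + 3) + length (ys i)"
    by (simp add: i(3) ys)
  ultimately show ?case
    by (simp add: ys)
qed

lemma rewind_out_steps:
  assumes "i < length ts" "set y \<subseteq> S" "j \<le> Suc (length y)" "t0 h0 \<in> tape_syms S"
  shows "steps (Suc j) (conf (RewindOut, i, 0, []) t0 h0 (word_tape y) j) =
         Some (conf (Copy, i, 0, []) t0 h0 (word_tape y) 1)"
  using assms(3)
proof (induction j)
  case 0
  then show ?case
    using assms N_pos by (simp add: tm_steps_Suc_conf)
next
  case (Suc j)
  have "steps 1 (conf (RewindOut, i, 0, []) t0 h0 (word_tape y) (Suc j)) =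
        Some (conf (RewindOut, i, 0, []) t0 h0 (word_tape y) j)"
    using assms N_pos by (simp add: tm_steps_Suc_conf control_rewinding word_tape_in_tape_syms)
  then show ?case
    using tm_steps_Suc_trans[OF _ Suc.IH] Suc.prems by simp
qed

lemma copy_steps:
  assumes "i < length ts" "set x \<subseteq> S" "set y \<subseteq> S" "j \<le> length y"
  shows "steps (Suc (length y - j))
           (conf (Copy, i, 0, []) (overwrite y j (word_tape x)) (Suc j) (word_tape y) (Suc j)) =
         Some (conf (Halt, i, 0, []) (overwrite y (Suc (length y)) (word_tape x)) (Suc (length y))
           (word_tape y) (Suc (length y)))"
  using assms(4)
proof (induction "length y - j" arbitrary: j)
  case 0
  then have "j = length y"
    by simp
  moreover have "overwrite y j (word_tape x) (Suc j) = word_tape x (Suc j)"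
    by (simp add: overwrite_def)
  ultimately show ?case
    using assms N_pos overwrite_Suc[of y j "word_tape x"]
    by (simp add: tm_steps_Suc_conf word_tape_in_tape_syms)
next
  case (Suc n)
  then have j: "j < length y" "n = length y - Suc j" "y ! j \<in> S"
    using assms(3) by auto
  moreover have "overwrite y j (word_tape x) (Suc j) = word_tape x (Suc j)"
    by (simp add: overwrite_def)
  ultimately show ?case
    using assms N_pos Suc.hyps(1)[of "Suc j"] overwrite_Suc[of y j "word_tape x"]
    by (simp add: tm_steps_Suc_conf word_tape_in_tape_syms word_tape_Suc_nth Suc_diff_Suc)
qed

lemma transducer_machine_run:
  assumes "set x \<subseteq> S"
  defines "y \<equiv> run_all ts x"
  shows "steps (length ts * (2 * length x + 3) + 3 * length y + 4) (init_config (transducer_machine ts S N K) x) =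
         Some (conf (Halt, length ts - 1, 0, []) (overwrite y (Suc (length y)) (word_tape x))
           (Suc (length y)) (word_tape y) (Suc (length y)))"
proof -
  let ?m = "length ts - 1"
  let ?start = "conf (Start, 0, 0, []) (word_tape x) 0 (word_tape []) 0"
  let ?halt = "conf (Halt, ?m, 0, []) (overwrite y (Suc (length y)) (word_tape x)) (Suc (length y))
    (word_tape y) (Suc (length y))"
  have y: "set y \<subseteq> S"
    using assms bounded bounded_transducer_run(1)[OF _ N_pos] by (fastforce simp: y_def run_all_def)
  have "steps 1 ?start = Some (conf (Scan, 0, 0, []) (word_tape x) 1 (word_tape []) 1)"
    using ts_ne N_pos by (simp add: tm_steps_Suc_conf)
  moreover have "steps (length ts * (2 * length x + 3) + length y)
      (conf (Scan, 0, 0, []) (word_tape x) 1 (word_tape []) 1) =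
    Some (conf (RewindOut, ?m, 0, []) (word_tape x) 1 (word_tape y) (Suc (length y)))"
    using passes_steps[of 0 x "[]"] ts_ne assms by (simp add: y_def)
  moreover have "steps (Suc (Suc (length y)))
      (conf (RewindOut, ?m, 0, []) (word_tape x) 1 (word_tape y) (Suc (length y))) =
    Some (conf (Copy, ?m, 0, []) (word_tape x) 1 (word_tape y) 1)"
    using ts_ne assms y by (intro rewind_out_steps) (auto simp: word_tape_in_tape_syms)
  moreover have "steps (Suc (length y)) (conf (Copy, ?m, 0, []) (word_tape x) 1 (word_tape y) 1) = Some ?halt"
    using copy_steps[of ?m x y 0] ts_ne assms y by (simp add: overwrite_0)
  ultimately have
    "steps (1 + (length ts * (2 * length x + 3) + length y) + Suc (Suc (length y)) + Suc (length y)) ?start =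
     Some ?halt"
    by (blast intro: tm_steps_trans)
  moreover have "1 + (length ts * (2 * length x + 3) + length y) + Suc (Suc (length y)) + Suc (length y) =
      length ts * (2 * length x + 3) + 3 * length y + 4"
    by simp
  ultimately show ?thesis
    by (simp only: init_config_transducer_machine)
qed

theorem lin_time_computable_run_all:
  assumes "finite S"
  shows "lin_time_computable 2 S (run_all ts)"
proof -
  let ?M = "transducer_machine ts S N K"
  let ?y = "run_all ts"
  let ?C = "3 * length ts + 3 * length ts * K + 4"
  have y: "set (?y x) \<subseteq> S" "length (?y x) \<le> length ts * (K * (length x + 1))" if "set x \<subseteq> S" for x
    using bounded bounded_transducer_run[OF _ N_pos that]
    by (fastforce simp: run_all_def intro: length_concat_map_le)+
  have halt: "tm_step 2 ?M (conf (Halt, i, q, ps) t0 h0 t1 h1) = None" for i q ps t0 h0 t1 h1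
    by (simp add: conf_def transducer_machine_def machine_delta_def)
  have "\<exists>t c. t \<le> ?C * (length x + 1) \<and> tm_steps 2 ?M t (init_config ?M x) = Some c \<and>
      tm_step 2 ?M c = None \<and> fst c \<in> tm_accept ?M \<and> has_output (fst (snd c) 0) (?y x)"
    if "x \<in> lists S" for x
  proof (intro exI conjI)
    show "length ts * (2 * length x + 3) + 3 * length (?y x) + 4 \<le> ?C * (length x + 1)"
    proof -
      have "length (?y x) \<le> length ts * (K * (length x + 1))"
        using y(2) that by auto
      then show ?thesis
        by (simp add: algebra_simps)
    qed
    show "tm_steps 2 ?M (length ts * (2 * length x + 3) + 3 * length (?y x) + 4) (init_config ?M x) =
        Some (conf (Halt, length ts - 1, 0, []) (overwrite (?y x) (Suc (length (?y x))) (word_tape x))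
          (Suc (length (?y x))) (word_tape (?y x)) (Suc (length (?y x))))"
      using transducer_machine_run that by auto
  qed (use ts_ne N_pos halt in \<open>auto simp: conf_def transducer_machine_def has_output_overwrite\<close>)
  moreover have "?y x \<in> lists S" if "x \<in> lists S" for x
    using y(1)[of x] that by (simp add: in_lists_conv_set subset_iff)
  moreover have "valid_tm 2 ?M" "S \<subseteq> tm_alpha ?M" "0 < ?C"
    using valid_transducer_machine[OF assms ts_ne N_pos] by (simp_all add: transducer_machine_def)
  ultimately show ?thesis
    unfolding lin_time_computable_def by blast
qed

end

section \<open>The free group of rank two\<close>

lemma inv_letter_inv_letter [simp]: "inv_letter (inv_letter x) = x"
  by (simp add: inv_letter_def)

lemma f2_reduced_simps [simp]:
  "f2_reduced []" "f2_reduced [x]"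
  "f2_reduced (x # y # w) \<longleftrightarrow> y \<noteq> inv_letter x \<and> f2_reduced (y # w)"
  by (auto simp: f2_reduced_def less_Suc_eq_0_disj)

lemma f2_reduced_Cons: "f2_reduced (x # w) \<longleftrightarrow> f2_reduced w \<and> (w \<noteq> [] \<longrightarrow> hd w \<noteq> inv_letter x)"
  by (cases w) auto

lemma f2_reduced_snoc: "f2_reduced (w @ [x]) \<longleftrightarrow> f2_reduced w \<and> (w \<noteq> [] \<longrightarrow> x \<noteq> inv_letter (last w))"
  by (induction w rule: induct_list012) auto

lemma f2_reduced_butlast: "f2_reduced w \<Longrightarrow> f2_reduced (butlast w)"
  by (cases w rule: rev_cases) (auto simp: f2_reduced_snoc)

lemma f2_mult_Nil [simp]: "f2_mult u [] = u"
  by (simp add: f2_mult_def)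

lemma f2_mult_Cons: "f2_mult u (x # v) = f2_mult (f2_mult_letter u x) v"
  by (simp add: f2_mult_def)

lemma f2_mult_snoc: "f2_mult u (v @ [x]) = f2_mult_letter (f2_mult u v) x"
  by (simp add: f2_mult_def)

lemma f2_reduced_mult_letter: "f2_reduced w \<Longrightarrow> f2_reduced (f2_mult_letter w x)"
  by (auto simp: f2_mult_letter_def f2_reduced_butlast f2_reduced_snoc)

lemma f2_reduced_mult: "f2_reduced u \<Longrightarrow> f2_reduced (f2_mult u v)"
  by (induction v arbitrary: u) (auto simp: f2_mult_Cons f2_reduced_mult_letter)

lemma f2_mult_letter_cancel:
  assumes "f2_reduced w"
  shows "f2_mult_letter (f2_mult_letter w x) (inv_letter x) = w"
proof (cases "w \<noteq> [] \<and> last w = inv_letter x")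
  case True
  then obtain u where "w = u @ [inv_letter x]"
    by (metis append_butlast_last_id)
  with assms show ?thesis
    by (auto simp: f2_mult_letter_def f2_reduced_snoc)
qed (auto simp: f2_mult_letter_def)

lemma f2_mult_mult_letter:
  assumes "f2_reduced u"
  shows "f2_mult u (f2_mult_letter v x) = f2_mult_letter (f2_mult u v) x"
proof (cases "v \<noteq> [] \<and> last v = inv_letter x")
  case True
  then obtain v' where "v = v' @ [inv_letter x]"
    by (metis append_butlast_last_id)
  then show ?thesis
    using f2_mult_letter_cancel[OF f2_reduced_mult[OF assms], of v' "inv_letter x"]
    by (simp add: f2_mult_letter_def f2_mult_snoc)
qed (auto simp: f2_mult_letter_def f2_mult_snoc)

lemma f2_mult_assoc: "f2_reduced u \<Longrightarrow> f2_mult u (f2_mult v w) = f2_mult (f2_mult u v) w"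
  by (induction w rule: rev_induct) (simp_all add: f2_mult_snoc f2_mult_mult_letter)

lemma f2_mult_Nil_left: "f2_reduced v \<Longrightarrow> f2_mult [] v = v"
  by (induction v rule: rev_induct) (auto simp: f2_mult_snoc f2_mult_letter_def f2_reduced_snoc)

lemma f2_mult_inv_left: "f2_mult (rev (map inv_letter w)) w = []"
proof (induction w)
  case (Cons x w)
  then show ?case
    by (simp add: f2_mult_Cons f2_mult_snoc f2_mult_letter_def)
qed simp

lemma f2_reduced_rev_inv: "f2_reduced w \<Longrightarrow> f2_reduced (rev (map inv_letter w))"
  by (induction w) (auto simp: f2_reduced_Cons f2_reduced_snoc last_rev hd_map)

lemma group_F2: "group F2"
proof (rule groupI)
  show "\<exists>v\<in>carrier F2. v \<otimes>\<^bsub>F2\<^esub> w = \<one>\<^bsub>F2\<^esub>" if "w \<in> carrier F2" for w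
    using that f2_reduced_rev_inv f2_mult_inv_left by (auto simp: F2_def)
qed (auto simp: F2_def f2_reduced_mult f2_mult_assoc f2_mult_Nil_left)

lemma carrier_F2: "carrier F2 = {w. f2_reduced w}"
  by (simp add: F2_def)

lemma mult_F2: "x \<otimes>\<^bsub>F2\<^esub> y = f2_mult x y"
  by (simp add: F2_def)

lemma inj_on_f2_mult: "f2_reduced g \<Longrightarrow> inj_on (f2_mult g) {w. f2_reduced w}"
  using group.inj_on_cmult[OF group_F2, of g] by (simp add: carrier_F2 mult_F2)

lemma f2_mult_inv_cancel:
  assumes "f2_reduced g" "f2_reduced f"
  shows "f2_mult g (f2_mult (inv\<^bsub>F2\<^esub> g) f) = f"
  using assms group.inv_solve_left'[OF group_F2, of "inv\<^bsub>F2\<^esub> g \<otimes>\<^bsub>F2\<^esub> f" g f]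
    group.inv_closed[OF group_F2, of g]
  by (simp add: carrier_F2 mult_F2 f2_reduced_mult)

lemma carrier_lamp_F2:
  "carrier lamp_F2 = {(F, g). finite F \<and> (\<forall>f\<in>F. f2_reduced f) \<and> f2_reduced g}"
  by (auto simp: lamp_F2_def carrier_F2)

section \<open>Words for the lamplighter group\<close>

definition letter_code :: "f2_letter \<Rightarrow> nat" where
  "letter_code x = (if fst x then 2 else 0) + (if snd x then 1 else 0)"

definition code_letter :: "nat \<Rightarrow> f2_letter" where
  "code_letter n = (2 \<le> n, odd n)"

definition inv_code :: "nat \<Rightarrow> nat" where
  "inv_code c = (if even c then Suc c else c - 1)"

lemma code_letter_letter_code [simp]: "code_letter (letter_code x) = x"
  by (cases x) (auto simp: letter_code_def code_letter_def)

lemma letter_code_less [simp]: "letter_code x < 4"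
  by (simp add: letter_code_def)

lemma letter_code_neq_marker [simp]: "letter_code x \<noteq> 4" "4 \<noteq> letter_code x"
  using letter_code_less[of x] by linarith+

lemma marker_notin_letter_codes [simp]: "4 \<notin> letter_code ` A"
  by auto

lemma letter_code_eq_iff [simp]: "letter_code x = letter_code y \<longleftrightarrow> x = y"
  by (metis code_letter_letter_code)

lemma letter_code_inv_letter: "letter_code (inv_letter x) = inv_code (letter_code x)"
  by (cases x) (auto simp: letter_code_def inv_code_def inv_letter_def)

lemma inv_code_less: "c < 4 \<Longrightarrow> inv_code c < 4"
  unfolding inv_code_def by (cases "c = 3") auto

abbreviation word_code :: "f2_letter list \<Rightarrow> nat list" where
  "word_code \<equiv> map letter_code"

lemma word_code_eq_iff [simp]: "word_code u = word_code v \<longleftrightarrow> u = v"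
  by (simp add: inj_map_eq_map inj_def)

definition lamp_word :: "f2_letter list \<Rightarrow> f2_letter list list \<Rightarrow> nat list" where
  "lamp_word g Fs = word_code g @ concat (map (\<lambda>e. 4 # word_code e) Fs)"

fun blocks :: "nat list \<Rightarrow> nat list list" where
  "blocks [] = [[]]"
| "blocks (a # w) = (if a = 4 then [] # blocks w else (a # hd (blocks w)) # tl (blocks w))"

lemma blocks_append_block:
  "4 \<notin> set u \<Longrightarrow> blocks (u @ w) = (u @ hd (blocks w)) # tl (blocks w)"
proof (induction u)
  case Nil
  have "blocks w \<noteq> []"
    by (induction w) auto
  then show ?case
    by simp
qed auto

lemma blocks_lamp_word: "blocks (lamp_word g Fs) = word_code g # map word_code Fs"
proof -
  have "blocks (concat (map (\<lambda>e. 4 # word_code e) Fs)) = [] # map word_code Fs"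
  proof (induction Fs)
    case (Cons e Fs)
    then show ?case
      using blocks_append_block[of "word_code e" "concat (map (\<lambda>e. 4 # word_code e) Fs)"] by simp
  qed simp
  then show ?thesis
    using blocks_append_block[of "word_code g" "concat (map (\<lambda>e. 4 # word_code e) Fs)"]
    by (simp add: lamp_word_def)
qed

definition lamp_decode :: "nat list \<Rightarrow> f2_letter list set \<times> f2_letter list" where
  "lamp_decode w =
     (let g = map code_letter (hd (blocks w))
      in (f2_mult g ` map code_letter ` set (tl (blocks w)), g))"

lemma lamp_decode_lamp_word: "lamp_decode (lamp_word g Fs) = (f2_mult g ` set Fs, g)"
  by (simp add: lamp_decode_def blocks_lamp_word image_image comp_def)

definition canonical :: "f2_letter list \<Rightarrow> f2_letter list list \<Rightarrow> bool" where
  "canonical g Fs \<longleftrightarrow>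
     f2_reduced g \<and> (\<forall>e\<in>set Fs. f2_reduced e) \<and> sorted_wrt (<) (map word_code Fs)"

definition lamp_lang :: "nat list set" where
  "lamp_lang = {lamp_word g Fs | g Fs. canonical g Fs}"

lemma lamp_lang_subset: "lamp_lang \<subseteq> lists {..4}"
  by (auto simp: lamp_lang_def lamp_word_def less_imp_le[OF letter_code_less] split: if_split_asm)

lemma inj_on_lamp_decode: "inj_on lamp_decode lamp_lang"
proof (rule inj_onI)
  fix w1 w2
  assume "w1 \<in> lamp_lang" "w2 \<in> lamp_lang" and eq: "lamp_decode w1 = lamp_decode w2"
  then obtain g1 Fs1 g2 Fs2 where w: "w1 = lamp_word g1 Fs1" "w2 = lamp_word g2 Fs2"
    and can: "canonical g1 Fs1" "canonical g2 Fs2"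
    by (auto simp: lamp_lang_def)
  then have g: "g1 = g2" and "f2_mult g1 ` set Fs1 = f2_mult g1 ` set Fs2"
    using eq by (auto simp: lamp_decode_lamp_word)
  moreover have "inj_on (f2_mult g1) {w. f2_reduced w}" "set Fs1 \<subseteq> {w. f2_reduced w}" "set Fs2 \<subseteq> {w. f2_reduced w}"
    using can by (auto simp: canonical_def inj_on_f2_mult)
  ultimately have "set (map word_code Fs1) = set (map word_code Fs2)"
    by (simp add: inj_on_image_eq_iff)
  then have "map word_code Fs1 = map word_code Fs2"
    using can by (simp add: canonical_def strict_sorted_equal)
  then show "w1 = w2"
    using w g by (simp add: inj_map_eq_map inj_def)
qed

lemma lamp_decode_onto: "lamp_decode ` lamp_lang = carrier lamp_F2"
proof
  show "lamp_decode ` lamp_lang \<subseteq> carrier lamp_F2"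
    by (auto simp: lamp_lang_def lamp_decode_lamp_word carrier_lamp_F2 canonical_def f2_reduced_mult)
next
  show "carrier lamp_F2 \<subseteq> lamp_decode ` lamp_lang"
  proof
    fix p
    assume "p \<in> carrier lamp_F2"
    then obtain F g where p: "p = (F, g)" "finite F" "\<forall>f\<in>F. f2_reduced f" "f2_reduced g"
      by (auto simp: carrier_lamp_F2)
    define E where "E = f2_mult (inv\<^bsub>F2\<^esub> g) ` F"
    define Fs where "Fs = map (map code_letter) (sorted_list_of_set (word_code ` E))"
    have "inv\<^bsub>F2\<^esub> g \<in> carrier F2"
      using p group.inv_closed[OF group_F2] by (simp add: carrier_F2)
    then have E: "\<forall>e\<in>E. f2_reduced e"
      by (auto simp: E_def carrier_F2 f2_reduced_mult)
    have codes: "map word_code Fs = sorted_list_of_set (word_code ` E)"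
      unfolding Fs_def map_map using p(2) by (intro map_idI) (auto simp: E_def)
    then have "set Fs = E"
      using p(2)
      by (metis E_def finite_imageI list.set_map set_sorted_list_of_set inj_image_eq_iff word_code_eq_iff inj_def)
    moreover have "f2_mult g ` E = F"
      using p E by (force simp: E_def image_image f2_mult_inv_cancel)
    ultimately have "lamp_decode (lamp_word g Fs) = p"
      using p by (simp add: lamp_decode_lamp_word)
    moreover have "canonical g Fs"
      using p E codes \<open>set Fs = E\<close> by (simp add: canonical_def)
    ultimately show "p \<in> lamp_decode ` lamp_lang"
      by (auto simp: lamp_lang_def)
  qed
qed

definition starts_with :: "f2_letter \<Rightarrow> f2_letter list \<Rightarrow> bool" where
  "starts_with x e \<longleftrightarrow> e \<noteq> [] \<and> hd e = x"

definition lamp_shift :: "f2_letter \<Rightarrow> f2_letter list \<Rightarrow> f2_letter list" where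
  "lamp_shift x e = (if starts_with x e then tl e else inv_letter x # e)"

text \<open>To keep the lamps sorted without sorting, the cancelled words are split according to how
  their tails compare with the prepended letter \<open>x\<inverse>\<close>.\<close>
definition low_tail :: "f2_letter \<Rightarrow> f2_letter list \<Rightarrow> bool" where
  "low_tail x e \<longleftrightarrow> starts_with x e \<and> word_code (tl e) < [letter_code (inv_letter x)]"

definition high_tail :: "f2_letter \<Rightarrow> f2_letter list \<Rightarrow> bool" where
  "high_tail x e \<longleftrightarrow> starts_with x e \<and> [Suc (letter_code (inv_letter x))] \<le> word_code (tl e)"

definition shift_lamps :: "f2_letter \<Rightarrow> f2_letter list list \<Rightarrow> f2_letter list list" where
  "shift_lamps x Fs =
     map tl (filter (low_tail x) Fs) @
     map (Cons (inv_letter x)) (filter (\<lambda>e. \<not> starts_with x e) Fs) @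
     map tl (filter (high_tail x) Fs)"

lemma starts_with_low_or_high:
  assumes "f2_reduced e" "starts_with x e"
  shows "low_tail x e \<or> high_tail x e"
proof (cases "tl e")
  case (Cons y r)
  then have "e = x # y # r"
    using assms(2) by (cases e) (auto simp: starts_with_def)
  then have "letter_code y \<noteq> letter_code (inv_letter x)"
    using assms(1) by simp
  then have "letter_code y < letter_code (inv_letter x) \<or> Suc (letter_code (inv_letter x)) \<le> letter_code y"
    by linarith
  then show ?thesis
    using assms(2) Cons by (auto simp: low_tail_def high_tail_def)
qed (use assms in \<open>simp add: low_tail_def\<close>)

lemma set_shift_lamps:
  assumes "\<forall>e\<in>set Fs. f2_reduced e"
  shows "set (shift_lamps x Fs) = lamp_shift x ` set Fs"
proof -
  have "{e \<in> set Fs. starts_with x e} = {e \<in> set Fs. low_tail x e} \<union> {e \<in> set Fs. high_tail x e}"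
    using assms starts_with_low_or_high[of _ x] by (auto simp: low_tail_def high_tail_def)
  then show ?thesis
    by (auto simp: shift_lamps_def lamp_shift_def image_iff)
qed

lemma sorted_tails:
  assumes "sorted_wrt (<) (map word_code Fs)" "\<forall>e\<in>set Fs. starts_with x e"
  shows "sorted_wrt (<) (map word_code (map tl Fs))"
proof -
  have "word_code (tl a) < word_code (tl b)"
    if "a \<in> set Fs" "b \<in> set Fs" "word_code a < word_code b" for a b
  proof -
    have "a = x # tl a" "b = x # tl b"
      using that(1,2) assms(2) by (auto simp: starts_with_def)
    then show ?thesis
      using that(3) by (metis Cons_less_Cons list.simps(9) order.irrefl)
  qed
  then show ?thesis
    using sorted_wrt_mono_rel[of Fs "\<lambda>a b. word_code a < word_code b"] assms(1)
    by (simp add: sorted_wrt_map)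
qed

lemma sorted_shift_lamps:
  assumes "sorted_wrt (<) (map word_code Fs)"
  shows "sorted_wrt (<) (map word_code (shift_lamps x Fs))"
proof -
  let ?k = "letter_code (inv_letter x)"
  let ?A = "map word_code (map tl (filter (low_tail x) Fs))"
  let ?B = "map word_code (map (Cons (inv_letter x)) (filter (\<lambda>e. \<not> starts_with x e) Fs))"
  let ?C = "map word_code (map tl (filter (high_tail x) Fs))"
  have sorted_filter: "sorted_wrt (<) (map word_code (filter P Fs))" for P
    using assms by (simp add: sorted_wrt_map sorted_wrt_filter)
  have sorted_AC: "sorted_wrt (<) ?A" "sorted_wrt (<) ?C"
    using sorted_tails[OF sorted_filter, of _ x] by (simp_all add: low_tail_def high_tail_def)
  have sorted_B: "sorted_wrt (<) ?B"
    using sorted_filter[of "\<lambda>e. \<not> starts_with x e"] by (simp add: sorted_wrt_map)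
  have A: "u < [?k]" if "u \<in> set ?A" for u
    using that by (auto simp: low_tail_def)
  have B: "[?k] \<le> v \<and> v < [Suc ?k]" if "v \<in> set ?B" for v
    using that by auto
  have C: "[Suc ?k] \<le> w" if "w \<in> set ?C" for w
    using that by (auto simp: high_tail_def)
  have A_less: "u < v" if "u \<in> set ?A" "v \<in> set ?B \<union> set ?C" for u v
  proof -
    have "[?k] \<le> v"
    proof (cases "v \<in> set ?B")
      case False
      then have "[Suc ?k] \<le> v"
        using that(2) C by blast
      then show ?thesis
        by (rule order.trans[rotated]) simp
    qed (use B in blast)
    with A[OF that(1)] show ?thesis
      by (rule less_le_trans)
  qed
  have B_less: "v < w" if "v \<in> set ?B" "w \<in> set ?C" for v w
    using B[OF that(1)] C[OF that(2)] by (blast intro: less_le_trans)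
  show ?thesis
    unfolding shift_lamps_def map_append sorted_wrt_append set_append
    using sorted_AC sorted_B A_less B_less by blast
qed

lemma canonical_shift_lamps:
  assumes "canonical g Fs"
  shows "canonical (f2_mult_letter g x) (shift_lamps x Fs)"
proof -
  have "f2_reduced (lamp_shift x e)" if "f2_reduced e" for e
    using that by (cases e) (auto simp: lamp_shift_def starts_with_def f2_reduced_Cons)
  then show ?thesis
    using assms set_shift_lamps[of Fs x] sorted_shift_lamps[of Fs x]
    by (auto simp: canonical_def f2_reduced_mult_letter)
qed

lemma f2_mult_lamp_shift:
  assumes "f2_reduced g"
  shows "f2_mult (f2_mult_letter g x) (lamp_shift x e) = f2_mult g e"
proof (cases "starts_with x e")
  case True
  then obtain r where "e = x # r"
    by (cases e) (auto simp: starts_with_def)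
  then show ?thesis
    using True by (simp add: lamp_shift_def f2_mult_Cons)
next
  case False
  then show ?thesis
    using assms by (simp add: lamp_shift_def f2_mult_Cons f2_mult_letter_cancel)
qed

lemma lamp_decode_shift_lamps:
  assumes "canonical g Fs"
  shows "lamp_decode (lamp_word (f2_mult_letter g x) (shift_lamps x Fs)) =
         lamp_decode (lamp_word g Fs) \<otimes>\<^bsub>lamp_F2\<^esub> ({}, [x])"
proof -
  have "f2_mult (f2_mult_letter g x) ` set (shift_lamps x Fs) = f2_mult g ` set Fs"
    using assms f2_mult_lamp_shift
    by (simp add: canonical_def set_shift_lamps image_image)
  then show ?thesis
    by (simp add: lamp_decode_lamp_word lamp_F2_def f2_mult_def)
qed

definition toggle_lamps :: "f2_letter list list \<Rightarrow> f2_letter list list" where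
  "toggle_lamps Fs = (if Fs \<noteq> [] \<and> hd Fs = [] then tl Fs else [] # Fs)"

lemma sorted_Nil_in_set:
  assumes "sorted_wrt (<) (map word_code Fs)"
  shows "[] \<in> set Fs \<longleftrightarrow> Fs \<noteq> [] \<and> hd Fs = []"
proof (cases Fs)
  case (Cons e Fs')
  have "\<not> word_code e < []"
    by simp
  then show ?thesis
    using assms Cons by (cases e) auto
qed simp

lemma set_toggle_lamps:
  assumes "sorted_wrt (<) (map word_code Fs)"
  shows "set (toggle_lamps Fs) = (set Fs - {[]}) \<union> ({[]} - set Fs)"
  using assms sorted_Nil_in_set[OF assms] by (cases Fs) (auto simp: toggle_lamps_def)

lemma canonical_toggle_lamps:
  assumes "canonical g Fs"
  shows "canonical g (toggle_lamps Fs)"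
proof (cases "Fs \<noteq> [] \<and> hd Fs = []")
  case True
  then obtain Fs' where "Fs = [] # Fs'"
    by (cases Fs) auto
  then show ?thesis
    using assms by (simp add: toggle_lamps_def canonical_def)
next
  case False
  then have "[] \<notin> set Fs"
    using assms sorted_Nil_in_set by (auto simp: canonical_def)
  then have "[] < word_code e" if "e \<in> set Fs" for e
    using that by (cases e) auto
  then show ?thesis
    using assms False by (auto simp: toggle_lamps_def canonical_def)
qed

lemma lamp_decode_toggle_lamps:
  assumes "canonical g Fs"
  shows "lamp_decode (lamp_word g (toggle_lamps Fs)) =
         lamp_decode (lamp_word g Fs) \<otimes>\<^bsub>lamp_F2\<^esub> ({[]}, [])"
proof -
  have inj: "inj_on (f2_mult g) {w. f2_reduced w}" and sub: "set Fs \<union> {[]} \<subseteq> {w. f2_reduced w}"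
    and sorted: "sorted_wrt (<) (map word_code Fs)"
    using assms by (auto simp: canonical_def inj_on_f2_mult)
  have "f2_mult g ` set (toggle_lamps Fs) = (f2_mult g ` set Fs - {g}) \<union> ({g} - f2_mult g ` set Fs)"
    unfolding set_toggle_lamps[OF sorted] image_Un
    using inj_on_image_set_diff[OF inj, of "set Fs" "{[]}"] inj_on_image_set_diff[OF inj, of "{[]}" "set Fs"] sub
    by auto
  then show ?thesis
    by (simp add: lamp_decode_lamp_word lamp_F2_def)
qed

section \<open>Transducers for the generators\<close>

text \<open>State 0 skips the position word; state \<open>Suc p\<close> runs \<open>T\<close> in state \<open>p\<close> on the current lamp
  word, and every separator restarts \<open>T\<close>.\<close>
definition per_lamp :: "transducer \<Rightarrow> transducer" where
  "per_lamp T =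
     \<lparr>tr_step = \<lambda>q a. case q of
         0 \<Rightarrow> (if a = 4 then (1, []) else (0, []))
       | Suc p \<Rightarrow> if a = 4 then (1, tr_final T p) else (Suc (fst (tr_step T p a)), snd (tr_step T p a)),
      tr_final = \<lambda>q. case q of 0 \<Rightarrow> [] | Suc p \<Rightarrow> tr_final T p\<rparr>"

lemma per_lamp_within_block:
  assumes "4 \<notin> set u"
  shows "tr_state (per_lamp T) (Suc p) u = Suc (tr_state T p u)"
    and "tr_output (per_lamp T) (Suc p) u = tr_output T p u"
  using assms by (induction u arbitrary: p) (simp_all add: per_lamp_def)

lemma tr_run_per_lamp:
  assumes "4 \<notin> set g" "\<forall>e\<in>set Es. 4 \<notin> set e"
  shows "tr_run (per_lamp T) (g @ concat (map (\<lambda>e. 4 # e) Es)) = concat (map (tr_run T) Es)"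
proof -
  have blocks: "tr_output (per_lamp T) 1 (e @ concat (map (\<lambda>e. 4 # e) Es)) @
      tr_final (per_lamp T) (tr_state (per_lamp T) 1 (e @ concat (map (\<lambda>e. 4 # e) Es))) =
    concat (map (tr_run T) (e # Es))" if "4 \<notin> set e" "\<forall>e\<in>set Es. 4 \<notin> set e" for e Es
    using that
  proof (induction Es arbitrary: e)
    case Nil
    then show ?case
      using per_lamp_within_block[of e T 0] by (simp add: tr_run_def per_lamp_def)
  next
    case (Cons e' Es)
    then show ?case
      using per_lamp_within_block[of e T 0]
      by (simp add: tr_output_append tr_state_append tr_run_def per_lamp_def)
  qed
  have "\<forall>a\<in>set g. tr_step (per_lamp T) 0 a = (0, [])"
    using assms(1) by (auto simp: per_lamp_def)
  from tr_loop[OF this] have skip: "tr_state (per_lamp T) 0 g = 0" "tr_output (per_lamp T) 0 g = []"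
    by simp_all
  show ?thesis
  proof (cases Es)
    case Nil
    then show ?thesis
      using skip by (simp add: tr_run_def tr_output_append tr_state_append per_lamp_def)
  next
    case (Cons e Es')
    then show ?thesis
      using skip blocks[of e Es'] assms(2)
      by (simp add: tr_run_def tr_output_append tr_state_append per_lamp_def)
  qed
qed

lemma bounded_per_lamp:
  assumes "bounded_transducer S N K T" "0 < N" "4 \<in> S"
  shows "bounded_transducer S (Suc N) K (per_lamp T)"
  using assms by (auto simp: bounded_transducer_def per_lamp_def split: nat.split)

definition select_tail :: "nat \<Rightarrow> (nat option \<Rightarrow> bool) \<Rightarrow> transducer" where
  "select_tail c P =
     \<lparr>tr_step = \<lambda>q a.
        if q = 0 then (if a = c then (1, []) else (3, []))
        else if q = 1 then (if P (Some a) then (2, [4, a]) else (3, []))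
        else if q = 2 then (2, [a]) else (3, []),
      tr_final = \<lambda>q. if q = 1 \<and> P None then [4] else []\<rparr>"

lemma tr_run_select_tail:
  "tr_run (select_tail c P) u =
     (if u \<noteq> [] \<and> hd u = c \<and> P (if tl u = [] then None else Some (hd (tl u))) then 4 # tl u else [])"
proof -
  have loop: "tr_state (select_tail c P) 3 v = 3" "tr_output (select_tail c P) 3 v = []"
    and copy: "tr_state (select_tail c P) 2 v = 2" "tr_output (select_tail c P) 2 v = v" for v
    using tr_loop[of v "select_tail c P" 3 "\<lambda>_. []"] tr_loop[of v "select_tail c P" 2 "\<lambda>a. [a]"]
    by (simp_all add: select_tail_def)
  show ?thesis
  proof (cases u)
    case (Cons a r)
    then show ?thesis
      using loop copy by (cases r) (simp_all add: tr_run_def select_tail_def)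
  qed (simp add: tr_run_def select_tail_def)
qed

definition prepend_inverse :: "nat \<Rightarrow> transducer" where
  "prepend_inverse c =
     \<lparr>tr_step = \<lambda>q a.
        if q = 0 then (if a = c then (2, []) else (1, [4, inv_code c, a]))
        else if q = 1 then (1, [a]) else (2, []),
      tr_final = \<lambda>q. if q = 0 then [4, inv_code c] else []\<rparr>"

lemma tr_run_prepend_inverse:
  "tr_run (prepend_inverse c) u = (if u \<noteq> [] \<and> hd u = c then [] else 4 # inv_code c # u)"
proof -
  have loop: "tr_state (prepend_inverse c) 2 v = 2" "tr_output (prepend_inverse c) 2 v = []"
    and copy: "tr_state (prepend_inverse c) 1 v = 1" "tr_output (prepend_inverse c) 1 v = v" for v
    using tr_loop[of v "prepend_inverse c" 2 "\<lambda>_. []"] tr_loop[of v "prepend_inverse c" 1 "\<lambda>a. [a]"]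
    by (simp_all add: prepend_inverse_def)
  show ?thesis
    using loop copy by (cases u) (simp_all add: tr_run_def prepend_inverse_def)
qed

text \<open>State \<open>Suc a\<close> holds the last letter \<open>a\<close> read so far, which may still cancel against the
  new letter; state 5 is entered at the first separator.\<close>
definition pending :: "nat \<Rightarrow> nat list" where
  "pending q = (case q of 0 \<Rightarrow> [] | Suc a \<Rightarrow> [a])"

definition position_end :: "nat \<Rightarrow> nat \<Rightarrow> nat list" where
  "position_end c q = (case q of 0 \<Rightarrow> [c] | Suc a \<Rightarrow> if a = inv_code c then [] else [a, c])"

definition move_position :: "nat \<Rightarrow> transducer" where
  "move_position c =
     \<lparr>tr_step = \<lambda>q a.
        if q = 5 then (5, []) else if a = 4 then (5, position_end c q) else (Suc a, pending q),
      tr_final = \<lambda>q. if q = 5 then [] else position_end c q\<rparr>"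

lemma move_position_delay:
  assumes "4 \<notin> set u" "q \<noteq> 5"
  shows "tr_output (move_position c) q u @ pending (tr_state (move_position c) q u) = pending q @ u"
    and "tr_state (move_position c) q u = (if u = [] then q else Suc (last u))"
  using assms by (induction u arbitrary: q) (auto simp: move_position_def pending_def)

lemma tr_run_move_position:
  "tr_run (move_position (letter_code x)) (lamp_word g Fs) = word_code (f2_mult_letter g x)"
proof -
  let ?G = "move_position (letter_code x)"
  let ?q = "tr_state ?G 0 (word_code g)"
  have sink: "tr_state ?G 5 v = 5" "tr_output ?G 5 v = []" for v
    using tr_loop[of v ?G 5 "\<lambda>_. []"] by (simp_all add: move_position_def)
  have delay: "tr_output ?G 0 (word_code g) @ pending ?q = word_code g"
    "?q = (if g = [] then 0 else Suc (letter_code (last g)))"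
    using move_position_delay[of "word_code g" 0] by (simp_all add: pending_def last_map)
  then have "?q \<noteq> 5"
    by auto
  then have "tr_run ?G (lamp_word g Fs) = tr_output ?G 0 (word_code g) @ position_end (letter_code x) ?q"
    using sink
    by (cases Fs) (simp_all add: lamp_word_def tr_run_def tr_output_append tr_state_append move_position_def)
  also have "\<dots> = word_code (f2_mult_letter g x)"
  proof (cases g rule: rev_cases)
    case (snoc g' l)
    then have "letter_code l = inv_code (letter_code x) \<longleftrightarrow> l = inv_letter x"
      by (metis letter_code_eq_iff letter_code_inv_letter)
    then show ?thesis
      using delay snoc by (simp add: position_end_def pending_def f2_mult_letter_def)
  qed (simp add: position_end_def f2_mult_letter_def)
  finally show ?thesis .
qed

definition toggle_first :: transducer where
  "toggle_first =
     \<lparr>tr_step = \<lambda>q a.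
        if q = 0 then (if a = 4 then (1, []) else (0, [a]))
        else if q = 1 then (if a = 4 then (2, [4]) else (2, [4, 4, a]))
        else (2, [a]),
      tr_final = \<lambda>q. if q = 0 then [4] else []\<rparr>"

lemma tr_run_toggle_first: "tr_run toggle_first (lamp_word g Fs) = lamp_word g (toggle_lamps Fs)"
proof -
  have position: "tr_state toggle_first 0 (word_code g) = 0" "tr_output toggle_first 0 (word_code g) = word_code g"
    using tr_loop[of "word_code g" toggle_first 0 "\<lambda>a. [a]"] by (auto simp: toggle_first_def comp_def)
  have copy: "tr_state toggle_first 2 v = 2" "tr_output toggle_first 2 v = v" for v
    using tr_loop[of v toggle_first 2 "\<lambda>a. [a]"] by (simp_all add: toggle_first_def)
  show ?thesis
  proof (cases Fs)
    case (Cons e Fs')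
    then show ?thesis
      using position copy
      by (cases e; cases Fs')
         (simp_all add: lamp_word_def tr_run_def toggle_first_def toggle_lamps_def tr_output_append tr_state_append)
  qed (use position in \<open>simp add: lamp_word_def tr_run_def toggle_first_def toggle_lamps_def\<close>)
qed

definition low_next :: "nat \<Rightarrow> nat option \<Rightarrow> bool" where
  "low_next k b = (case b of None \<Rightarrow> True | Some a \<Rightarrow> a < k)"

definition high_next :: "nat \<Rightarrow> nat option \<Rightarrow> bool" where
  "high_next k b = (case b of None \<Rightarrow> False | Some a \<Rightarrow> k < a)"

definition move_transducers :: "f2_letter \<Rightarrow> transducer list" where
  "move_transducers x =
     (let c = letter_code x; k = inv_code c
      in [move_position c, per_lamp (select_tail c (low_next k)), per_lamp (prepend_inverse c),
          per_lamp (select_tail c (high_next k))])"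

lemma tr_run_select_low_tail:
  "tr_run (select_tail (letter_code x) (low_next (inv_code (letter_code x)))) (word_code e) =
     (if low_tail x e then 4 # word_code (tl e) else [])"
  by (cases e; cases "tl e")
     (auto simp: tr_run_select_tail low_next_def low_tail_def starts_with_def letter_code_inv_letter)

lemma tr_run_select_high_tail:
  "tr_run (select_tail (letter_code x) (high_next (inv_code (letter_code x)))) (word_code e) =
     (if high_tail x e then 4 # word_code (tl e) else [])"
  by (cases e; cases "tl e")
     (auto simp: tr_run_select_tail high_next_def high_tail_def starts_with_def letter_code_inv_letter)

lemma tr_run_prepend_inverse_code:
  "tr_run (prepend_inverse (letter_code x)) (word_code e) =
     (if \<not> starts_with x e then 4 # word_code (inv_letter x # e) else [])"
  by (cases e) (auto simp: tr_run_prepend_inverse starts_with_def letter_code_inv_letter)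

lemma concat_map_if_Nil:
  "concat (map (\<lambda>e. if P e then f e else []) xs) = concat (map f (filter P xs))"
  by (induction xs) auto

lemma run_all_move_transducers:
  "run_all (move_transducers x) (lamp_word g Fs) = lamp_word (f2_mult_letter g x) (shift_lamps x Fs)"
proof -
  have per_lamp: "tr_run (per_lamp T) (lamp_word g Fs) = concat (map (tr_run T) (map word_code Fs))" for T
    using tr_run_per_lamp[of "word_code g" "map word_code Fs" T] by (simp add: lamp_word_def comp_def)
  let ?c = "letter_code x" and ?k = "inv_code (letter_code x)"
  have "run_all (move_transducers x) (lamp_word g Fs) =
      word_code (f2_mult_letter g x) @
      concat (map (tr_run (select_tail ?c (low_next ?k))) (map word_code Fs)) @
      concat (map (tr_run (prepend_inverse ?c)) (map word_code Fs)) @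
      concat (map (tr_run (select_tail ?c (high_next ?k))) (map word_code Fs))"
    by (simp add: run_all_def move_transducers_def Let_def per_lamp tr_run_move_position)
  also have "\<dots> = lamp_word (f2_mult_letter g x) (shift_lamps x Fs)"
    by (simp add: lamp_word_def shift_lamps_def comp_def tr_run_select_low_tail tr_run_select_high_tail
        tr_run_prepend_inverse_code concat_map_if_Nil)
  finally show ?thesis .
qed

lemma bounded_move_transducers:
  assumes "T \<in> set (move_transducers x)"
  shows "bounded_transducer {..4} 6 3 T"
proof -
  let ?c = "letter_code x"
  have c: "?c \<le> 4" "inv_code ?c < 4"
    by (simp_all add: inv_code_less less_imp_le)
  have "bounded_transducer {..4} 6 3 (move_position ?c)"
    using c by (auto simp: bounded_transducer_def move_position_def position_end_def pending_def split: nat.split)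
  moreover have "bounded_transducer {..4} 6 3 (per_lamp (select_tail ?c P))" for P
    by (rule bounded_per_lamp[of _ 5, simplified]) (auto simp: bounded_transducer_def select_tail_def)
  moreover have "bounded_transducer {..4} 6 3 (per_lamp (prepend_inverse ?c))"
    using c by (intro bounded_per_lamp[of _ 5, simplified]) (auto simp: bounded_transducer_def prepend_inverse_def)
  ultimately show ?thesis
    using assms by (auto simp: move_transducers_def Let_def)
qed

lemma bounded_toggle_first: "bounded_transducer {..4} 6 3 toggle_first"
  by (auto simp: bounded_transducer_def toggle_first_def)

definition gen_transducers :: "f2_letter list set \<times> f2_letter list \<Rightarrow> transducer list" where
  "gen_transducers s = (case snd s of [x] \<Rightarrow> move_transducers x | _ \<Rightarrow> [toggle_first])"

lemma lin_time_computable_gen_transducers: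
  assumes "s \<in> lamp_F2_gens"
  shows "lin_time_computable 2 {..4} (run_all (gen_transducers s))"
proof (rule lin_time_computable_run_all)
  show "gen_transducers s \<noteq> []" "\<forall>T\<in>set (gen_transducers s). bounded_transducer {..4} 6 3 T"
    using assms bounded_move_transducers bounded_toggle_first
    by (auto simp: lamp_F2_gens_def gen_transducers_def move_transducers_def Let_def)
qed simp_all

lemma gen_transducers_step:
  assumes "s \<in> lamp_F2_gens" "canonical g Fs"
  obtains g' Fs' where "run_all (gen_transducers s) (lamp_word g Fs) = lamp_word g' Fs'" "canonical g' Fs'"
    "lamp_decode (lamp_word g' Fs') = lamp_decode (lamp_word g Fs) \<otimes>\<^bsub>lamp_F2\<^esub> s"
proof -
  from assms(1) consider (move) x where "s = ({}, [x])" | (toggle) "s = ({[]}, [])"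
    by (auto simp: lamp_F2_gens_def)
  then show thesis
  proof cases
    case move
    then show thesis
      using that[of "f2_mult_letter g x" "shift_lamps x Fs"] assms(2)
      by (simp add: gen_transducers_def run_all_move_transducers canonical_shift_lamps lamp_decode_shift_lamps)
  next
    case toggle
    then show thesis
      using that[of g "toggle_lamps Fs"] assms(2)
      by (simp add: gen_transducers_def run_all_def tr_run_toggle_first canonical_toggle_lamps
          lamp_decode_toggle_lamps)
  qed
qed

theorem theorem3p5:
  shows "cayley_lin_computable 2 lamp_F2 lamp_F2_gens"
  unfolding cayley_lin_computable_def
proof (intro exI[of _ "{..4}"] exI[of _ lamp_lang] exI[of _ lamp_decode]
    exI[of _ "\<lambda>s. run_all (gen_transducers s)"] conjI ballI)
  show "bij_betw lamp_decode lamp_lang (carrier lamp_F2)"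
    by (rule bij_betw_imageI[OF inj_on_lamp_decode lamp_decode_onto])
  fix s w
  assume s: "s \<in> lamp_F2_gens" and "w \<in> lamp_lang"
  then obtain g Fs where w: "w = lamp_word g Fs" "canonical g Fs"
    by (auto simp: lamp_lang_def)
  obtain g' Fs' where "run_all (gen_transducers s) w = lamp_word g' Fs'" "canonical g' Fs'"
    "lamp_decode (lamp_word g' Fs') = lamp_decode w \<otimes>\<^bsub>lamp_F2\<^esub> s"
    using gen_transducers_step[OF s w(2)] unfolding w(1) .
  then show "run_all (gen_transducers s) w \<in> lamp_lang"
    and "lamp_decode (run_all (gen_transducers s) w) = lamp_decode w \<otimes>\<^bsub>lamp_F2\<^esub> s"
    by (auto simp: lamp_lang_def)
qed (simp_all add: lamp_lang_subset lin_time_computable_gen_transducers)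

end
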